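(* Let $n$ be divisible by $4$, $m=n/4$, and let $R=S\times T$ with $S\subseteq\mathcal{P}(X)$, $T\subseteq\mathcal{P}(Y)$ be a $[1,n]$-rectangle. Then \[ \big||R\cap A|-|R\cap B|\big|\le 2^{3m}. \]
   Context: $X=\{x_1,\dots,x_n\}$, $Y=\{y_1,\dots,y_n\}$, $Z=X\cup Y$, $z_i=x_i$ ($i\in[n]$), $z_i=y_{i-n}$ ($i\in[n+1,2n]$), $Z[i,j]=\{z_\ell:i\le\ell\le j\}$. $S\times T=\{U\cup V:U\in S,V\in T\}$. With $m=n/4$, intervals $I_k=Z[4(k-1)+1,4k]$, $k\in[2m]$. $\mathcal{L}=\{U\subseteq Z: |U\cap I_k|=1\ \forall k\in[2m]\}$. $A=\{U\in\mathcal{L}: |\{i\in[n]: x_i,y_i\in U\}| \text{ odd}\}$, $B=\mathcal{L}\setminus A$. *)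

theory Defs
  imports Main
begin

(* Encoding: z_i is the natural number i (1 <= i <= 2n); so x_i = i, y_i = n + i,
   X = {1..n}, Y = {n+1..2n}, Z = {1..2n}. *)

definition Zint :: "nat \<Rightarrow> nat \<Rightarrow> nat set" where
  "Zint i j = {l. i \<le> l \<and> l \<le> j}"

definition Iblk :: "nat \<Rightarrow> nat set" where
  "Iblk k = Zint (4 * (k - 1) + 1) (4 * k)"

definition rect_times :: "'a set set \<Rightarrow> 'a set set \<Rightarrow> 'a set set" where
  "rect_times S T = {U \<union> V | U V. U \<in> S \<and> V \<in> T}"

definition Lset :: "nat \<Rightarrow> nat set set" where
  "Lset n = {U. U \<subseteq> Zint 1 (2 * n) \<and>
               (\<forall>k \<in> {1..2 * (n div 4)}. card (U \<inter> Iblk k) = 1)}"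

definition Aset :: "nat \<Rightarrow> nat set set" where
  "Aset n = {U \<in> Lset n. odd (card {i \<in> {1..n}. i \<in> U \<and> n + i \<in> U})}"

definition Bset :: "nat \<Rightarrow> nat set set" where
  "Bset n = Lset n - Aset n"

end

theory Submission
  imports Defs "HOL-Analysis.Convex"
begin

text \<open>
  A set \<open>U \<in> L\<close> picks one element from each of the \<open>2m\<close> blocks of four, so it
  is encoded by a pair \<open>(a, b)\<close> of words in \<open>{0..3}\<^sup>m\<close>: \<open>a\<close> records the choices
  in the blocks of \<open>X\<close> and \<open>b\<close> those in the blocks of \<open>Y\<close>.  The \<open>k\<close>-th blocks of
  \<open>X\<close> and of \<open>Y\<close> are aligned, so \<open>x\<^sub>i\<close> and \<open>y\<^sub>i\<close> both lie in \<open>U\<close> exactly when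
  \<open>a\<close> and \<open>b\<close> agree at the block containing \<open>i\<close>; hence \<open>U \<in> A\<close> iff \<open>a\<close> and \<open>b\<close>
  agree in an odd number of positions.  For \<open>R = S \<times> T\<close> this gives
  \<open>|R \<inter> A| - |R \<inter> B| = - (\<Sum>a\<in>S'. \<Sum>b\<in>T'. M a b)\<close>, where \<open>S'\<close>, \<open>T'\<close> are the
  codes of the members of \<open>S\<close>, \<open>T\<close> and \<open>M a b = (-1) ^ #{k. a k = b k}\<close> is the
  \<open>m\<close>-th tensor power of the \<open>4 \<times> 4\<close> matrix \<open>J - 2I\<close>.  The rows of \<open>M\<close> are
  orthogonal of squared norm \<open>4 ^ m\<close>, and Lindsey's lemma (Cauchy-Schwarz) bounds
  such a rectangle sum by \<open>sqrt (|S'| |T'| 4 ^ m) \<le> 2 ^ (3m)\<close>.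
\<close>

lemma lindsey_bound:
  fixes M :: "'a \<Rightarrow> 'b \<Rightarrow> 'c::linordered_field"
  assumes "finite D" "finite E" "S \<subseteq> D" "T \<subseteq> E"
    and orth: "\<And>b b'. b \<in> E \<Longrightarrow> b' \<in> E \<Longrightarrow>
                 (\<Sum>a\<in>D. M a b * M a b') = (if b = b' then N else 0)"
  shows "(\<Sum>a\<in>S. \<Sum>b\<in>T. M a b)\<^sup>2 \<le> of_nat (card S) * of_nat (card T) * N"
proof -
  define g where "g a = (\<Sum>b\<in>T. M a b)" for a
  have "finite T" using assms(2,4) finite_subset by blast
  have "(\<Sum>a\<in>S. g a)\<^sup>2 \<le> of_nat (card S) * (\<Sum>a\<in>S. (g a)\<^sup>2)"
    using Cauchy_Schwarz_ineq_sum[of "\<lambda>_. 1" g S] by simp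
  also have "(\<Sum>a\<in>S. (g a)\<^sup>2) \<le> (\<Sum>a\<in>D. (g a)\<^sup>2)"
    by (rule sum_mono2) (use assms in auto)
  also have "(\<Sum>a\<in>D. (g a)\<^sup>2) = (\<Sum>b\<in>T. \<Sum>b'\<in>T. \<Sum>a\<in>D. M a b * M a b')"
    by (simp add: g_def power2_eq_square sum_product sum.swap[of _ D])
  also have "\<dots> = (\<Sum>b\<in>T. \<Sum>b'\<in>T. if b = b' then N else 0)"
    using assms(4) by (intro sum.cong refl orth) auto
  also have "\<dots> = of_nat (card T) * N"
    using \<open>finite T\<close> by simp
  finally show ?thesis
    by (simp add: g_def mult.assoc mult_left_mono)
qed

lemma tensor_orthogonal:
  fixes M :: "'a \<Rightarrow> 'b \<Rightarrow> 'c::comm_semiring_1"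
  assumes "finite K" "finite X"
    and orth: "\<And>y y'. y \<in> Y \<Longrightarrow> y' \<in> Y \<Longrightarrow>
                 (\<Sum>x\<in>X. M x y * M x y') = (if y = y' then c else 0)"
    and "b \<in> PiE K (\<lambda>_. Y)" "b' \<in> PiE K (\<lambda>_. Y)"
  shows "(\<Sum>a\<in>PiE K (\<lambda>_. X). (\<Prod>k\<in>K. M (a k) (b k)) * (\<Prod>k\<in>K. M (a k) (b' k)))
           = (if b = b' then c ^ card K else 0)"
proof -
  have "(\<Sum>a\<in>PiE K (\<lambda>_. X). (\<Prod>k\<in>K. M (a k) (b k)) * (\<Prod>k\<in>K. M (a k) (b' k)))
      = (\<Prod>k\<in>K. \<Sum>x\<in>X. M x (b k) * M x (b' k))"
    by (simp add: prod_sum_PiE assms(1,2) prod.distrib)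
  also have "\<dots> = (\<Prod>k\<in>K. if b k = b' k then c else 0)"
    using assms(4,5) by (intro prod.cong refl orth) auto
  also have "\<dots> = (if b = b' then c ^ card K else 0)"
  proof (cases "b = b'")
    case False
    then obtain k where "b k \<noteq> b' k" by auto
    moreover from this have "k \<in> K" using assms(4,5) by (metis PiE_arb)
    ultimately show ?thesis using assms(1) False by (auto intro!: prod_zero)
  qed simp
  finally show ?thesis .
qed

abbreviation choices :: "nat \<Rightarrow> (nat \<Rightarrow> nat) set" where
  "choices m \<equiv> PiE {..<m} (\<lambda>_. {..<4})"

definition agree_sign :: "nat \<Rightarrow> (nat \<Rightarrow> nat) \<Rightarrow> (nat \<Rightarrow> nat) \<Rightarrow> real" where
  "agree_sign m a b = (-1) ^ card {k. k < m \<and> a k = b k}"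

lemma agree_sign_eq_prod: "agree_sign m a b = (\<Prod>k<m. if a k = b k then -1 else 1)"
proof -
  have "(\<Prod>k<m. if a k = b k then -1 else 1 :: real) = (-1) ^ card ({..<m} \<inter> {k. a k = b k})"
    by (simp only: prod.If_cases[OF finite_lessThan] prod_constant power_one mult_1_right)
  also have "{..<m} \<inter> {k. a k = b k} = {k. k < m \<and> a k = b k}"
    by auto
  finally show ?thesis
    by (simp add: agree_sign_def)
qed

lemma sign_matrix_orthogonal:
  fixes y y' :: nat
  assumes "y < 4" "y' < 4"
  shows "(\<Sum>x<4. (if x = y then -1 else 1) * (if x = y' then -1 else 1 :: real))
           = (if y = y' then 4 else 0)"
proof -
  have "y \<in> {0, 1, 2, 3}" "y' \<in> {0, 1, 2, 3}"
    using assms by auto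
  moreover have "(\<Sum>x<4. g x) = g 0 + g 1 + g 2 + g 3" for g :: "nat \<Rightarrow> real"
    by (simp add: eval_nat_numeral)
  ultimately show ?thesis
    by auto
qed

lemma agree_sign_orthogonal:
  assumes "b \<in> choices m" "b' \<in> choices m"
  shows "(\<Sum>a\<in>choices m. agree_sign m a b * agree_sign m a b') = (if b = b' then 4 ^ m else 0)"
proof -
  have "(\<Sum>a\<in>choices m. (\<Prod>k<m. if a k = b k then -1 else 1) * (\<Prod>k<m. if a k = b' k then -1 else 1))
      = (if b = b' then 4 ^ card {..<m} else (0::real))"
    by (rule tensor_orthogonal) (use sign_matrix_orthogonal assms in auto)
  then show ?thesis
    by (simp add: agree_sign_eq_prod)
qed

lemma agree_sign_discrepancy:
  assumes "S \<subseteq> choices m" "T \<subseteq> choices m"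
  shows "\<bar>\<Sum>a\<in>S. \<Sum>b\<in>T. agree_sign m a b\<bar> \<le> 2 ^ (3 * m)"
proof -
  have fin: "finite (choices m)" by (simp add: finite_PiE)
  have card: "card S \<le> 4 ^ m" "card T \<le> 4 ^ m"
    using assms card_mono[OF fin] by (auto simp: card_PiE)
  have "(\<Sum>a\<in>S. \<Sum>b\<in>T. agree_sign m a b)\<^sup>2 \<le> real (card S) * real (card T) * 4 ^ m"
    by (rule lindsey_bound[OF fin fin assms agree_sign_orthogonal])
  also have "\<dots> \<le> 4 ^ m * 4 ^ m * 4 ^ m"
    using card by (intro mult_mono) (simp_all flip: of_nat_power)
  also have "\<dots> = 4 ^ (3 * m)"
    by (simp add: numeral_3_eq_3 power_add)
  also have "\<dots> = (2 ^ (3 * m))\<^sup>2"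
    by (simp add: power2_eq_square flip: power_mult_distrib)
  finally have "\<bar>\<Sum>a\<in>S. \<Sum>b\<in>T. agree_sign m a b\<bar> \<le> \<bar>2 ^ (3 * m)\<bar>"
    by (simp only: abs_le_square_iff)
  then show ?thesis
    by simp
qed

lemma Zint_eq_atLeastAtMost [simp]: "Zint i j = {i..j}"
  by (auto simp: Zint_def)

definition block :: "nat \<Rightarrow> nat \<Rightarrow> nat set" where
  "block off j = {off + 4 * j + 1 .. off + 4 * j + 4}"

definition block_transversal :: "nat \<Rightarrow> nat \<Rightarrow> nat set \<Rightarrow> bool" where
  "block_transversal off m V \<longleftrightarrow>
     V \<subseteq> {off + 1 .. off + 4 * m} \<and> (\<forall>j<m. card (V \<inter> block off j) = 1)"

definition block_choice :: "nat \<Rightarrow> nat \<Rightarrow> (nat \<Rightarrow> nat) \<Rightarrow> nat set" where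
  "block_choice off m a = (\<lambda>j. off + 4 * j + 1 + a j) ` {..<m}"

lemma four_mult_add_eq_iff:
  fixes x y :: nat
  assumes "x < 4" "y < 4"
  shows "4 * j + x = 4 * k + y \<longleftrightarrow> j = k \<and> x = y"
  using assms by arith

lemma Lset_iff_block_transversal: "U \<in> Lset (4 * m) \<longleftrightarrow> block_transversal 0 (2 * m) U"
proof -
  have "(\<forall>k\<in>{1..2 * m}. P k) \<longleftrightarrow> (\<forall>j<2 * m. P (Suc j))" for P
    unfolding image_Suc_lessThan[symmetric] by auto
  moreover have "Iblk (Suc j) = block 0 j" for j
    by (simp add: Iblk_def block_def)
  ultimately show ?thesis
    by (simp add: Lset_def block_transversal_def)
qed

lemma block_transversal_Un:
  assumes V: "V \<subseteq> {off + 1 .. off + 4 * m}"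
    and W: "W \<subseteq> {off + 4 * m + 1 .. off + 4 * m + 4 * m'}"
  shows "block_transversal off (m + m') (V \<union> W) \<longleftrightarrow>
           block_transversal off m V \<and> block_transversal (off + 4 * m) m' W"
proof -
  have low: "(V \<union> W) \<inter> block off j = V \<inter> block off j" if "j < m" for j
    using W that by (auto simp: block_def)
  have high: "(V \<union> W) \<inter> block off (m + j) = W \<inter> block (off + 4 * m) j" for j
    using V by (auto simp: block_def)
  have split: "(\<forall>j<m + m'. P j) \<longleftrightarrow> (\<forall>j<m. P j) \<and> (\<forall>j<m'. P (m + j))" for P
  proof -
    have "P j" if "\<forall>j<m. P j" "\<forall>j<m'. P (m + j)" "j < m + m'" for j
      using that by (cases "j < m") (auto dest: spec[of _ "j - m"])
    then show ?thesis
      by auto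
  qed
  have "V \<union> W \<subseteq> {off + 1 .. off + 4 * (m + m')}"
    using V W by auto
  then have "block_transversal off (m + m') (V \<union> W) \<longleftrightarrow>
      (\<forall>j<m. card ((V \<union> W) \<inter> block off j) = 1) \<and>
      (\<forall>j<m'. card ((V \<union> W) \<inter> block off (m + j)) = 1)"
    by (simp add: block_transversal_def split)
  also have "\<dots> \<longleftrightarrow> (\<forall>j<m. card (V \<inter> block off j) = 1) \<and>
      (\<forall>j<m'. card (W \<inter> block (off + 4 * m) j) = 1)"
    by (simp add: low high)
  finally show ?thesis
    using V W by (simp add: block_transversal_def)
qed

lemma block_choice_Int_block:
  assumes "a \<in> choices m" "j < m"
  shows "block_choice off m a \<inter> block off j = {off + 4 * j + 1 + a j}"
proof -
  have "off + 4 * k + 1 + a k \<in> block off j \<longleftrightarrow> k = j" if "k < m" for k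
  proof -
    have "a k < 4" "a j < 4"
      using assms that by auto
    then show ?thesis
      unfolding block_def atLeastAtMost_iff by presburger
  qed
  then show ?thesis
    using assms by (auto simp: block_choice_def)
qed

lemma block_choice_subset:
  assumes "a \<in> choices m"
  shows "block_choice off m a \<subseteq> {off + 1 .. off + 4 * m}"
proof -
  have "4 * j + a j < 4 * m" if "j < m" for j
  proof -
    have "a j < 4"
      using assms that by auto
    with that show ?thesis
      by presburger
  qed
  then show ?thesis
    by (fastforce simp: block_choice_def)
qed

lemma interval_eq_UN_block: "{off + 1 .. off + 4 * m} = (\<Union>j<m. block off j)"
proof (intro equalityI subsetI)
  fix v assume v: "v \<in> {off + 1 .. off + 4 * m}"
  define j where "j = (v - off - 1) div 4"
  have "j < m" "v \<in> block off j"
    using v unfolding j_def block_def atLeastAtMost_iff by arith+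
  then show "v \<in> (\<Union>j<m. block off j)"
    by blast
qed (auto simp: block_def)

lemma block_transversal_iff: "block_transversal off m V \<longleftrightarrow> V \<in> block_choice off m ` choices m"
proof
  assume V: "block_transversal off m V"
  define f where "f j = the_elem (V \<inter> block off j)" for j
  have f: "V \<inter> block off j = {f j}" if "j < m" for j
    using V that unfolding f_def block_transversal_def
    by (simp add: is_singleton_altdef flip: is_singleton_the_elem)
  define a where "a = restrict (\<lambda>j. f j - (off + 4 * j + 1)) {..<m}"
  have a: "a \<in> choices m"
  proof (rule PiE_I)
    fix j assume "j \<in> {..<m}"
    then have "f j \<in> block off j"
      using f by blast
    then show "a j \<in> {..<4}"
      using \<open>j \<in> {..<m}\<close> by (auto simp: a_def block_def)
  qed (simp add: a_def)
  have fa: "f j = off + 4 * j + 1 + a j" if "j < m" for j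
  proof -
    have "f j \<in> block off j"
      using f[OF that] by blast
    with that show ?thesis
      by (auto simp: a_def block_def)
  qed
  have "V = block_choice off m a"
  proof (intro equalityI subsetI)
    fix v assume "v \<in> V"
    then obtain j where "j < m" "v \<in> block off j"
      using V interval_eq_UN_block[of off m] by (auto simp: block_transversal_def)
    then have "v = off + 4 * j + 1 + a j"
      using f[OF \<open>j < m\<close>] fa[OF \<open>j < m\<close>] \<open>v \<in> V\<close> by auto
    with \<open>j < m\<close> show "v \<in> block_choice off m a"
      unfolding block_choice_def by (auto intro: rev_image_eqI[of j])
  next
    fix v assume "v \<in> block_choice off m a"
    then obtain j where "j < m" "v = off + 4 * j + 1 + a j"
      by (auto simp: block_choice_def)
    then show "v \<in> V"
      using f[OF \<open>j < m\<close>] fa[OF \<open>j < m\<close>] by auto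
  qed
  with a show "V \<in> block_choice off m ` choices m"
    by blast
next
  assume "V \<in> block_choice off m ` choices m"
  then obtain a where "a \<in> choices m" "V = block_choice off m a"
    by blast
  then show "block_transversal off m V"
    using block_choice_subset block_choice_Int_block by (simp add: block_transversal_def)
qed

lemma inj_on_block_choice: "inj_on (block_choice off m) (choices m)"
proof (rule inj_onI)
  fix a b assume ab: "a \<in> choices m" "b \<in> choices m" "block_choice off m a = block_choice off m b"
  show "a = b"
  proof (rule PiE_ext[OF ab(1,2)])
    fix j assume "j \<in> {..<m}"
    then have "{off + 4 * j + 1 + a j} = {off + 4 * j + 1 + b j}"
      using block_choice_Int_block[OF ab(1), of j off] block_choice_Int_block[OF ab(2), of j off] ab(3)
      by simp
    then show "a j = b j"
      by simp
  qed
qed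

lemma block_choice_add: "block_choice (off + d) m a = (+) d ` block_choice off m a"
  by (auto simp: block_choice_def image_image add_ac)

lemma card_block_choice_Int:
  assumes a: "a \<in> choices m" and b: "b \<in> choices m"
  shows "card (block_choice off m a \<inter> block_choice off m b) = card {k. k < m \<and> a k = b k}"
proof -
  let ?pos = "\<lambda>j. off + 4 * j + 1 + a j"
  have lt4: "a j < 4" "b j < 4" if "j < m" for j
    using a b that by auto
  have "block_choice off m a \<inter> block_choice off m b = ?pos ` {k. k < m \<and> a k = b k}"
    (is "_ = ?pos ` ?agree")
  proof (intro equalityI subsetI)
    fix x assume "x \<in> block_choice off m a \<inter> block_choice off m b"
    then obtain j k where "j < m" "k < m" "x = ?pos j" "x = off + 4 * k + 1 + b k"
      by (auto simp: block_choice_def)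
    moreover from this have "a j = b j"
      using four_mult_add_eq_iff[OF lt4(1)[of j] lt4(2)[of k], of j k] by simp
    ultimately show "x \<in> ?pos ` ?agree"
      by (auto intro: rev_image_eqI[of j])
  next
    fix x assume "x \<in> ?pos ` ?agree"
    then obtain k where "k < m" "a k = b k" "x = ?pos k"
      by auto
    then show "x \<in> block_choice off m a \<inter> block_choice off m b"
      unfolding block_choice_def by (auto intro: rev_image_eqI[of k])
  qed
  moreover have "card (?pos ` ?agree) = card ?agree"
  proof (rule card_image, rule inj_onI)
    fix j k assume "j \<in> ?agree" "k \<in> ?agree" "?pos j = ?pos k"
    then show "j = k"
      using four_mult_add_eq_iff[OF lt4(1)[of j] lt4(1)[of k], of j k] by simp
  qed
  ultimately show ?thesis
    by (simp only:)
qed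

lemma block_choice_Un_in_Lset:
  assumes "a \<in> choices m" "b \<in> choices m"
  shows "block_choice 0 m a \<union> block_choice (4 * m) m b \<in> Lset (4 * m)"
proof -
  have "block_transversal 0 m (block_choice 0 m a)"
    and "block_transversal (0 + 4 * m) m (block_choice (0 + 4 * m) m b)"
    using assms unfolding block_transversal_iff by (simp_all add: imageI)
  moreover have "block_choice 0 m a \<subseteq> {0 + 1 .. 0 + 4 * m}"
    and "block_choice (0 + 4 * m) m b \<subseteq> {0 + 4 * m + 1 .. 0 + 4 * m + 4 * m}"
    using assms by (simp_all only: block_choice_subset)
  ultimately have "block_transversal 0 (m + m) (block_choice 0 m a \<union> block_choice (0 + 4 * m) m b)"
    using block_transversal_Un by blast
  then show ?thesis
    by (simp add: Lset_iff_block_transversal mult_2)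
qed

definition choices_in :: "nat \<Rightarrow> nat \<Rightarrow> nat set set \<Rightarrow> (nat \<Rightarrow> nat) set" where
  "choices_in off m S = {a \<in> choices m. block_choice off m a \<in> S}"

lemma rect_times_Int_Lset:
  assumes S: "S \<subseteq> Pow {1 .. 4 * m}" and T: "T \<subseteq> Pow {4 * m + 1 .. 2 * (4 * m)}"
  shows "rect_times S T \<inter> Lset (4 * m) =
           (\<lambda>(a, b). block_choice 0 m a \<union> block_choice (4 * m) m b) `
             (choices_in 0 m S \<times> choices_in (4 * m) m T)"
proof (intro equalityI subsetI)
  fix U assume "U \<in> rect_times S T \<inter> Lset (4 * m)"
  then obtain V W where U: "U = V \<union> W" "U \<in> Lset (4 * m)" and VW: "V \<in> S" "W \<in> T"
    by (auto simp: rect_times_def)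
  have "block_transversal 0 (m + m) (V \<union> W)"
    using U by (simp add: Lset_iff_block_transversal mult_2)
  then have "block_transversal 0 m V" "block_transversal (0 + 4 * m) m W"
    using block_transversal_Un[of V 0 m W m] S T VW by auto
  then obtain a b where "a \<in> choices m" "V = block_choice 0 m a"
    and "b \<in> choices m" "W = block_choice (4 * m) m b"
    by (auto simp: block_transversal_iff)
  with U VW show "U \<in> (\<lambda>(a, b). block_choice 0 m a \<union> block_choice (4 * m) m b) `
                    (choices_in 0 m S \<times> choices_in (4 * m) m T)"
    by (auto simp: choices_in_def)
next
  fix U assume "U \<in> (\<lambda>(a, b). block_choice 0 m a \<union> block_choice (4 * m) m b) `
                    (choices_in 0 m S \<times> choices_in (4 * m) m T)"
  then show "U \<in> rect_times S T \<inter> Lset (4 * m)"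
    using block_choice_Un_in_Lset by (auto simp: choices_in_def rect_times_def)
qed

lemma inj_on_Un_image:
  assumes "inj_on f X" "inj_on g Y" "f ` X \<subseteq> Pow A" "g ` Y \<subseteq> Pow B" "A \<inter> B = {}"
  shows "inj_on (\<lambda>(x, y). f x \<union> g y) (X \<times> Y)"
proof (rule inj_onI, clarify)
  fix x y x' y'
  assume xy: "x \<in> X" "y \<in> Y" "x' \<in> X" "y' \<in> Y" and eq: "f x \<union> g y = f x' \<union> g y'"
  have parts: "(f u \<union> g v) \<inter> A = f u" "(f u \<union> g v) - A = g v" if "u \<in> X" "v \<in> Y" for u v
  proof -
    have "f u \<subseteq> A" "g v \<subseteq> B"
      using assms(3,4) that by auto
    with assms(5) show "(f u \<union> g v) \<inter> A = f u" "(f u \<union> g v) - A = g v"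
      by blast+
  qed
  have "f x = f x'" "g y = g y'"
    using parts[of x y] parts[of x' y'] xy eq by simp_all
  then show "x = x' \<and> y = y'"
    using assms(1,2) xy by (auto dest: inj_onD)
qed

lemma inj_on_block_choice_Un:
  "inj_on (\<lambda>(a, b). block_choice 0 m a \<union> block_choice (4 * m) m b) (choices m \<times> choices m)"
proof (rule inj_on_Un_image[OF inj_on_block_choice inj_on_block_choice])
  show "block_choice 0 m ` choices m \<subseteq> Pow {0 + 1 .. 0 + 4 * m}"
    and "block_choice (4 * m) m ` choices m \<subseteq> Pow {4 * m + 1 .. 4 * m + 4 * m}"
    using block_choice_subset by blast+
qed auto

lemma block_choice_Un_in_Aset_iff:
  assumes a: "a \<in> choices m" and b: "b \<in> choices m"
  shows "block_choice 0 m a \<union> block_choice (4 * m) m b \<in> Aset (4 * m) \<longleftrightarrow>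
           odd (card {k. k < m \<and> a k = b k})"
proof -
  let ?V = "block_choice 0 m a" and ?W = "block_choice (4 * m) m b"
  have V: "?V \<subseteq> {1 .. 4 * m}" and W: "?W = (+) (4 * m) ` block_choice 0 m b"
    using block_choice_subset[OF a, of 0] block_choice_add[of 0 "4 * m" m b] by simp_all
  have "?W \<subseteq> {4 * m + 1 ..}"
    using block_choice_subset[OF b, of "4 * m"] by auto
  with V W have "{i \<in> {1 .. 4 * m}. i \<in> ?V \<union> ?W \<and> 4 * m + i \<in> ?V \<union> ?W} = ?V \<inter> block_choice 0 m b"
    by auto
  then show ?thesis
    using block_choice_Un_in_Lset[OF a b] card_block_choice_Int[OF a b]
    by (simp add: Aset_def)
qed

lemma card_Int_minus_card_Diff:
  assumes "finite C"
  shows "real (card (C \<inter> A)) - real (card (C - A)) = (\<Sum>x\<in>C. if x \<in> A then 1 else -1)"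
  using assms by (simp add: sum.If_cases Diff_eq)

lemma rect_discrepancy_eq_agree_sign_sum:
  assumes S: "S \<subseteq> Pow {1 .. 4 * m}" and T: "T \<subseteq> Pow {4 * m + 1 .. 2 * (4 * m)}"
  shows "real (card (rect_times S T \<inter> Aset (4 * m))) - real (card (rect_times S T \<inter> Bset (4 * m)))
           = - (\<Sum>a\<in>choices_in 0 m S. \<Sum>b\<in>choices_in (4 * m) m T. agree_sign m a b)"
proof -
  let ?F = "\<lambda>(a, b). block_choice 0 m a \<union> block_choice (4 * m) m b"
  let ?P = "choices_in 0 m S \<times> choices_in (4 * m) m T"
  have P: "?P \<subseteq> choices m \<times> choices m"
    by (auto simp: choices_in_def)
  then have "finite ?P"
    by (rule finite_subset) (simp add: finite_PiE)
  have inj: "inj_on ?F ?P"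
    using inj_on_block_choice_Un P by (rule inj_on_subset)
  have R: "rect_times S T \<inter> Lset (4 * m) = ?F ` ?P"
    using rect_times_Int_Lset[OF S T] .
  have "rect_times S T \<inter> Aset (4 * m) = ?F ` ?P \<inter> Aset (4 * m)"
    and "rect_times S T \<inter> Bset (4 * m) = ?F ` ?P - Aset (4 * m)"
    unfolding R[symmetric] by (auto simp: Bset_def Aset_def)
  then have "real (card (rect_times S T \<inter> Aset (4 * m))) - real (card (rect_times S T \<inter> Bset (4 * m)))
      = (\<Sum>U\<in>?F ` ?P. if U \<in> Aset (4 * m) then 1 else -1)"
    using \<open>finite ?P\<close> by (simp add: card_Int_minus_card_Diff)
  also have "\<dots> = (\<Sum>(a, b)\<in>?P. if ?F (a, b) \<in> Aset (4 * m) then 1 else -1)"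
    by (rule sum.reindex_cong[OF inj refl]) auto
  also have "\<dots> = (\<Sum>(a, b)\<in>?P. - agree_sign m a b)"
    using P by (intro sum.cong refl) (auto simp: block_choice_Un_in_Aset_iff agree_sign_def)
  also have "\<dots> = - (\<Sum>(a, b)\<in>?P. agree_sign m a b)"
    by (simp add: split_def sum_negf)
  finally show ?thesis
    by (simp add: sum.cartesian_product)
qed

theorem mainTheorem11:
  fixes n :: nat and S T :: "nat set set"
  assumes "4 dvd n"
    and "S \<subseteq> Pow (Zint 1 n)"
    and "T \<subseteq> Pow (Zint (n + 1) (2 * n))"
  shows "\<bar>int (card (rect_times S T \<inter> Aset n)) - int (card (rect_times S T \<inter> Bset n))\<bar>
           \<le> 2 ^ (3 * (n div 4))"
proof -
  obtain m where n: "n = 4 * m"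
    using assms(1) by blast
  have "choices_in 0 m S \<subseteq> choices m" "choices_in (4 * m) m T \<subseteq> choices m"
    by (auto simp: choices_in_def)
  then have "\<bar>real (card (rect_times S T \<inter> Aset n)) - real (card (rect_times S T \<inter> Bset n))\<bar>
      \<le> 2 ^ (3 * m)"
    using rect_discrepancy_eq_agree_sign_sum[of S m T] agree_sign_discrepancy assms(2,3)
    by (simp add: n)
  then have "real_of_int \<bar>int (card (rect_times S T \<inter> Aset n)) - int (card (rect_times S T \<inter> Bset n))\<bar>
      \<le> real_of_int (2 ^ (3 * (n div 4)))"
    by (simp add: n)
  then show ?thesis
    by (simp only: of_int_le_iff)
qed

end
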